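(* Let $n\ge3$. Let $\mathbf{b}_0=10^{n-1}\in\{0,1\}^n$ and, for $1\le i\le\lceil n/2\rceil-1$, let $\mathbf{b}_i\in\{0,1\}^n$ have ones exactly in coordinates $2i$ and $2i+1$. Let $V_{\mathcal{B}}=\mathrm{span}_{\mathbb{F}_2}\{\mathbf{b}_0,\ldots,\mathbf{b}_{\lceil n/2\rceil-1}\}$. For $\mathbf{a}=(a_0,a_1,\ldots,a_{\lceil n/2\rceil-1})\in\{0,1\}^{\lceil n/2\rceil}$ and $\mathbf{s}=\sum_{i=0}^{\lceil n/2\rceil-1}a_i\mathbf{b}_i$ (sum over $\mathbb{F}_2^n$), \[ \widehat{\mathds{1}_{S_2}}(\mathbf{s})=2^{\lfloor n/2\rfloor-n}\cdot(-1)^{w(\mathbf{a})-a_0}. \] Moreover, $\widehat{\mathds{1}_{S_2}}(\mathbf{s})=0$ for all $\mathbf{s}\notin V_{\mathcal{B}}$.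
   Context: Fourier transform: $\widehat{f}(\mathbf{s})=2^{-n}\sum_{\mathbf{x}\in\{0,1\}^n}f(\mathbf{x})(-1)^{\mathbf{x}\cdot\mathbf{s}}$. $w(\cdot)$ is Hamming weight. $S_2\subseteq\{0,1\}^n$ (the 2-charge constraint) is the set of $\mathbf{x}\in\{0,1\}^n$ such that, with $y_i=(-1)^{x_i}$, every running sum satisfies $0\le\sum_{i=1}^r y_i\le 2$ for $1\le r\le n$. *)

theory Defs
  imports Complex_Main
begin

text \<open>Vectors in {0,1}^n are boolean lists of length n; coordinate i (1-based, 1 \<le> i \<le> n)
  is the list entry at index i - 1. True = 1, False = 0.\<close>

definition cube :: "nat \<Rightarrow> bool list set" where
  "cube n = {x. length x = n}"

definition spin :: "bool \<Rightarrow> int" where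
  "spin b = (if b then -1 else 1)"

definition S2 :: "nat \<Rightarrow> bool list set" where
  "S2 n = {x \<in> cube n. \<forall>r \<in> {1..n}. 0 \<le> (\<Sum>i<r. spin (x ! i)) \<and> (\<Sum>i<r. spin (x ! i)) \<le> 2}"

text \<open>Inner product x \<cdot> s over F_2, represented by the number of common ones (only parity matters).\<close>
definition dotc :: "nat \<Rightarrow> bool list \<Rightarrow> bool list \<Rightarrow> nat" where
  "dotc n x s = card {i. i < n \<and> x ! i \<and> s ! i}"

definition fourier :: "nat \<Rightarrow> (bool list \<Rightarrow> real) \<Rightarrow> bool list \<Rightarrow> real" where
  "fourier n f s = (1 / 2 ^ n) * (\<Sum>x \<in> cube n. f x * (-1) ^ dotc n x s)"

definition indS2 :: "nat \<Rightarrow> bool list \<Rightarrow> real" where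
  "indS2 n x = (if x \<in> S2 n then 1 else 0)"

definition wt :: "bool list \<Rightarrow> nat" where
  "wt a = length (filter id a)"

definition halfc :: "nat \<Rightarrow> nat" where
  "halfc n = nat \<lceil>real n / 2\<rceil>"

text \<open>Basis vectors: b_0 = 10^{n-1} (one exactly in coordinate 1);
  for i \<ge> 1, b_i has ones exactly in coordinates 2i and 2i+1 (list indices 2i-1 and 2i).\<close>
definition bvec :: "nat \<Rightarrow> nat \<Rightarrow> bool list" where
  "bvec n i = map (\<lambda>j. if i = 0 then j = 0 else (j = 2*i - 1 \<or> j = 2*i)) [0..<n]"

definition comb :: "nat \<Rightarrow> bool list \<Rightarrow> bool list" where
  "comb n a = map (\<lambda>j. odd (card {i. i < length a \<and> a ! i \<and> bvec n i ! j})) [0..<n]"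

definition VB :: "nat \<Rightarrow> bool list set" where
  "VB n = {comb n a | a. length a = halfc n}"

end

theory Submission
  imports Defs
begin

text \<open>The coefficient is computed by a transfer recursion over the charge of the walk.
  Starting at charge 0 the first step is forced to +1; from charge 1 every admissible walk
  moves to 0 or 2 and immediately returns to 1. A pair of coordinates t, u of s therefore
  contributes the factor (-1)^t + (-1)^u, which is 2 (-1)^t if t = u and 0 otherwise, and
  a final unpaired coordinate contributes 1 + (-1)^t. Hence the coefficient is nonzero
  exactly when the tail of s is constant on consecutive pairs and ends in 0 when n is even,
  which is membership in V_B, and its sign counts the pairs of ones.\<close>

definition bounded_walk :: "int \<Rightarrow> bool list \<Rightarrow> bool" where
  "bounded_walk c x \<longleftrightarrow>
     (\<forall>r\<in>{1..length x}. 0 \<le> c + (\<Sum>i<r. spin (x ! i)) \<and> c + (\<Sum>i<r. spin (x ! i)) \<le> 2)"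

fun walk_transform :: "int \<Rightarrow> bool list \<Rightarrow> real" where
  "walk_transform c [] = 1"
| "walk_transform c (t # s) = (\<Sum>b\<in>UNIV. if 0 \<le> c + spin b \<and> c + spin b \<le> 2
        then (-1) ^ (if b \<and> t then 1 else 0) * walk_transform (c + spin b) s else 0)"

fun paired :: "bool list \<Rightarrow> bool" where
  "paired [] = True"
| "paired [t] = (\<not> t)"
| "paired (t # u # r) = (t = u \<and> paired r)"

fun pair_sign :: "bool list \<Rightarrow> nat" where
  "pair_sign [] = 0"
| "pair_sign [t] = 0"
| "pair_sign (t # u # r) = (if t then 1 else 0) + pair_sign r"

lemma walk_transform_Cons:
  "walk_transform c (t # s) =
     (if 0 \<le> c + 1 \<and> c + 1 \<le> 2 then walk_transform (c + 1) s else 0)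
   + (if 0 \<le> c - 1 \<and> c - 1 \<le> 2 then (if t then -1 else 1) * walk_transform (c - 1) s else 0)"
  by (simp add: UNIV_bool spin_def)

lemma walk_transform_from_one:
  "walk_transform 1 r = (if paired r then 2 ^ ((length r + 1) div 2) * (-1) ^ pair_sign r else 0)"
proof (induction r rule: paired.induct)
  case (3 t u r)
  have "walk_transform 1 (t # u # r) = ((if u then -1 else 1) + (if t then -1 else 1)) * walk_transform 1 r"
    by (simp only: walk_transform_Cons) (simp add: algebra_simps)
  then show ?case using 3 by auto
qed (simp_all only: walk_transform_Cons, simp_all)

lemma bounded_walk_Nil: "bounded_walk c []"
  by (simp add: bounded_walk_def)

lemma bounded_walk_Cons:
  "bounded_walk c (b # x) \<longleftrightarrow> 0 \<le> c + spin b \<and> c + spin b \<le> 2 \<and> bounded_walk (c + spin b) x"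
proof -
  have sums: "(\<Sum>i<Suc r. spin ((b # x) ! i)) = spin b + (\<Sum>i<r. spin (x ! i))" for r
    by (simp only: sum.lessThan_Suc_shift nth_Cons_0 nth_Cons_Suc)
  have ivl: "{1..Suc m} = insert (Suc 0) (Suc ` {1..m})" for m :: nat
    by (auto simp: image_iff)
  show ?thesis
    unfolding bounded_walk_def length_Cons ivl ball_simps(7,9) sums by (simp add: add.assoc)
qed

lemma cube_Suc: "cube (Suc m) = (\<lambda>(b, x). b # x) ` (UNIV \<times> cube m)"
  by (auto simp: cube_def length_Suc_conv image_iff)

lemma dotc_Cons: "dotc (Suc m) (b # x) (t # s) = (if b \<and> t then 1 else 0) + dotc m x s"
proof -
  have split: "{i. i < Suc m \<and> (b # x) ! i \<and> (t # s) ! i}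
      = (if b \<and> t then {0} else {}) \<union> Suc ` {i. i < m \<and> x ! i \<and> s ! i}"
    by (auto simp: image_iff less_Suc_eq_0_disj)
  have "card {i. i < Suc m \<and> (b # x) ! i \<and> (t # s) ! i}
      = card (if b \<and> t then {0::nat} else {}) + card (Suc ` {i. i < m \<and> x ! i \<and> s ! i})"
    unfolding split by (rule card_Un_disjoint) auto
  then show ?thesis
    by (simp add: dotc_def card_image)
qed

lemma sum_bounded_walk_signs:
  "length s = m \<Longrightarrow>
   (\<Sum>x\<in>cube m. (if bounded_walk c x then 1 else 0) * (-1::real) ^ dotc m x s) = walk_transform c s"
proof (induction s arbitrary: c m)
  case Nil
  have "cube 0 = {[]}" by (auto simp: cube_def)
  then show ?case using Nil by (simp add: dotc_def bounded_walk_Nil)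
next
  case (Cons t s)
  then obtain m' where m: "m = Suc m'" "length s = m'" by auto
  define g where "g x = (if bounded_walk c x then 1 else 0) * (-1::real) ^ dotc m x (t # s)" for x
  have "(\<Sum>x\<in>cube m. g x) = (\<Sum>(b, x)\<in>UNIV \<times> cube m'. g (b # x))"
    unfolding m(1) cube_Suc by (subst sum.reindex) (auto simp: inj_on_def split_def)
  also have "\<dots> = (\<Sum>b\<in>UNIV. \<Sum>x\<in>cube m'. g (b # x))"
    by (rule sum.cartesian_product[symmetric])
  also have "\<dots> = walk_transform c (t # s)"
    unfolding walk_transform.simps(2)
  proof (rule sum.cong[OF refl])
    fix b
    have "g (b # x) = (if 0 \<le> c + spin b \<and> c + spin b \<le> 2 then (-1) ^ (if b \<and> t then 1 else 0)
        * ((if bounded_walk (c + spin b) x then 1 else 0) * (-1) ^ dotc m' x s) else 0)" for x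
      by (simp add: g_def m(1) bounded_walk_Cons dotc_Cons power_add)
    then show "(\<Sum>x\<in>cube m'. g (b # x)) = (if 0 \<le> c + spin b \<and> c + spin b \<le> 2
        then (-1) ^ (if b \<and> t then 1 else 0) * walk_transform (c + spin b) s else 0)"
      by (cases "0 \<le> c + spin b \<and> c + spin b \<le> 2")
        (simp_all only: simp_thms if_True if_False sum.neutral_const sum_distrib_left[symmetric] Cons.IH[OF m(2)])
  qed
  finally show ?case by (simp add: g_def)
qed

lemma fourier_indS2:
  assumes "s \<in> cube n" "n \<ge> 1"
  shows "fourier n (indS2 n) s = walk_transform 1 (tl s) / 2 ^ n"
proof -
  obtain t s' where s: "s = t # s'"
    using assms by (cases s) (auto simp: cube_def)
  have "indS2 n x = (if bounded_walk 0 x then 1 else 0)" if "x \<in> cube n" for x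
    using that by (simp add: indS2_def S2_def bounded_walk_def cube_def)
  then have "fourier n (indS2 n) s
      = (\<Sum>x\<in>cube n. (if bounded_walk 0 x then 1 else 0) * (-1::real) ^ dotc n x s) / 2 ^ n"
    by (simp add: fourier_def)
  also have "\<dots> = walk_transform 0 s / 2 ^ n"
    using assms(1) sum_bounded_walk_signs[of s n 0] by (simp add: cube_def)
  also have "walk_transform 0 s = walk_transform 1 (tl s)"
    by (simp only: s walk_transform_Cons) simp
  finally show ?thesis .
qed

lemma halfc_eq: "halfc n = (n + 1) div 2"
proof -
  have "\<lceil>real n / 2\<rceil> = int ((n + 1) div 2)"
    by (rule ceiling_unique) (cases "even n"; auto elim!: evenE oddE)+
  then show ?thesis by (simp add: halfc_def)
qed

lemma paired_iff:
  "paired r \<longleftrightarrow> (\<forall>j. 2 * j + 1 < length r \<longrightarrow> r ! (2 * j) = r ! (2 * j + 1))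
      \<and> (odd (length r) \<longrightarrow> \<not> r ! (length r - 1))"
proof (induction r rule: paired.induct)
  case (3 t u r)
  have pairs: "(\<forall>j. 2 * j + 1 < length (t # u # r) \<longrightarrow> (t # u # r) ! (2 * j) = (t # u # r) ! (2 * j + 1))
      \<longleftrightarrow> t = u \<and> (\<forall>j. 2 * j + 1 < length r \<longrightarrow> r ! (2 * j) = r ! (2 * j + 1))"
    (is "?L \<longleftrightarrow> ?R")
  proof
    assume L: ?L
    have "t = u" using L[rule_format, of 0] by simp
    moreover have "r ! (2 * j) = r ! (2 * j + 1)" if "2 * j + 1 < length r" for j
      using L[rule_format, of "Suc j"] that by simp
    ultimately show ?R by blast
  next
    assume ?R
    show ?L
    proof (intro allI impI)
      fix j
      assume "2 * j + 1 < length (t # u # r)"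
      with \<open>?R\<close> show "(t # u # r) ! (2 * j) = (t # u # r) ! (2 * j + 1)"
        by (cases j) auto
    qed
  qed
  have last: "(odd (length (t # u # r)) \<longrightarrow> \<not> (t # u # r) ! (length (t # u # r) - 1))
      \<longleftrightarrow> (odd (length r) \<longrightarrow> \<not> r ! (length r - 1))"
    by (cases r) auto
  show ?case unfolding pairs last using 3 by simp
qed simp_all

lemma pair_sign_eq: "pair_sign r = (\<Sum>j < length r div 2. if r ! (2 * j) then 1 else 0)"
proof (induction r rule: pair_sign.induct)
  case (3 t u r)
  then show ?case by (simp only: length_Cons div2_Suc_Suc sum.lessThan_Suc_shift) simp
qed simp_all

lemma wt_eq: "wt a = (\<Sum>i<length a. if a ! i then 1 else 0)"
proof (induction a)
  case (Cons x a)
  then show ?case by (simp only: length_Cons sum.lessThan_Suc_shift) (simp add: wt_def)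
qed (simp add: wt_def)

lemma comb_nth:
  assumes "j < n"
  shows "comb n a ! j = (if j = 0 then 0 < length a \<and> a ! 0
                         else (j + 1) div 2 < length a \<and> a ! ((j + 1) div 2))"
proof -
  have pair_index: "i \<noteq> 0 \<Longrightarrow> (j = 2 * i - 1 \<or> j = 2 * i) \<longleftrightarrow> j \<noteq> 0 \<and> i = (j + 1) div 2" for i
    by presburger
  have "comb n a ! j
      = odd (card {i. i < length a \<and> a ! i \<and> (if i = 0 then j = 0 else j = 2 * i - 1 \<or> j = 2 * i)})"
    using assms by (simp add: comb_def bvec_def)
  also have "{i. i < length a \<and> a ! i \<and> (if i = 0 then j = 0 else j = 2 * i - 1 \<or> j = 2 * i)}
      = (if j = 0 then (if 0 < length a \<and> a ! 0 then {0} else {})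
         else if (j + 1) div 2 < length a \<and> a ! ((j + 1) div 2) then {(j + 1) div 2} else {})"
    using pair_index by (auto split: if_splits)
  finally show ?thesis
    by simp
qed

lemma length_comb [simp]: "length (comb n a) = n"
  by (simp add: comb_def)

lemma tl_comb_nth:
  assumes "j < n - 1"
  shows "tl (comb n a) ! j = (j div 2 + 1 < length a \<and> a ! (j div 2 + 1))"
proof -
  have "tl (comb n a) ! j = comb n a ! Suc j"
    using assms by (simp add: nth_tl)
  also have "\<dots> = (j div 2 + 1 < length a \<and> a ! (j div 2 + 1))"
    using assms by (simp add: comb_nth)
  finally show ?thesis .
qed

lemma paired_tl_comb:
  assumes "length a = (n + 1) div 2"
  shows "paired (tl (comb n a))"
  unfolding paired_iff
proof (intro conjI allI impI)
  fix j
  assume "2 * j + 1 < length (tl (comb n a))"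
  then show "tl (comb n a) ! (2 * j) = tl (comb n a) ! (2 * j + 1)"
    by (simp add: tl_comb_nth)
next
  assume "odd (length (tl (comb n a)))"
  then have "even n" "n \<ge> 2" by auto
  then show "\<not> tl (comb n a) ! (length (tl (comb n a)) - 1)"
    using assms by (auto simp: tl_comb_nth elim!: evenE)
qed

lemma pair_sign_tl_comb:
  assumes "length a = (n + 1) div 2" "n \<ge> 1"
  shows "pair_sign (tl (comb n a)) = wt a - (if a ! 0 then 1 else 0)"
proof -
  have len: "length a = Suc ((n - 1) div 2)"
    using assms by simp
  have "pair_sign (tl (comb n a)) = (\<Sum>j < (n - 1) div 2. if a ! Suc j then 1 else 0)"
    unfolding pair_sign_eq
    by (rule sum.cong) (auto simp: tl_comb_nth len)
  also have "\<dots> = wt a - (if a ! 0 then 1 else 0)"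
    unfolding wt_eq len sum.lessThan_Suc_shift by simp
  finally show ?thesis .
qed

lemma paired_tl_imp_in_VB:
  assumes s: "s \<in> cube n" and "n \<ge> 1" and pr: "paired (tl s)"
  shows "s \<in> VB n"
proof -
  have len: "length s = n" using s by (simp add: cube_def)
  have pair_eq: "s ! (2 * i - 1) = s ! (2 * i)" if "i \<ge> 1" "2 * i < n" for i
  proof -
    have "tl s ! (2 * (i - 1)) = tl s ! (2 * (i - 1) + 1)"
      using pr that len unfolding paired_iff by simp
    moreover have "2 * (i - 1) + 1 = 2 * i - 1" "Suc (2 * (i - 1) + 1) = 2 * i"
      using that by auto
    ultimately show ?thesis using that len by (simp add: nth_tl)
  qed
  have last_zero: "\<not> s ! (n - 1)" if "even n"
  proof -
    have "odd (length (tl s))" using that len \<open>n \<ge> 1\<close> by simp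
    then have "\<not> tl s ! (length (tl s) - 1)" using pr unfolding paired_iff by blast
    moreover have "Suc (length (tl s) - 1) = n - 1" using that len \<open>n \<ge> 1\<close> by (auto elim!: evenE)
    ultimately show ?thesis using that len \<open>n \<ge> 1\<close> by (simp add: nth_tl)
  qed
  define a where "a = map (\<lambda>i. if i = 0 then s ! 0 else s ! (2 * i - 1)) [0..<(n + 1) div 2]"
  have "comb n a = s"
  proof (rule nth_equalityI)
    show "length (comb n a) = length s" using len by simp
  next
    fix j
    assume "j < length (comb n a)"
    then have j: "j < n" by simp
    define i where "i = (j + 1) div 2"
    consider "j = 0" | "j \<noteq> 0" "i < (n + 1) div 2" "j = 2 * i - 1"
      | "j \<noteq> 0" "i < (n + 1) div 2" "j = 2 * i" | "j \<noteq> 0" "\<not> i < (n + 1) div 2"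
    proof -
      have "j = 2 * i - 1 \<or> j = 2 * i" unfolding i_def by presburger
      then show thesis using that by blast
    qed
    moreover have comb_j: "comb n a ! j
        = (if j = 0 then s ! 0 else i < (n + 1) div 2 \<and> s ! (2 * i - 1))"
      using j \<open>n \<ge> 1\<close> by (auto simp: comb_nth a_def i_def)
    ultimately show "comb n a ! j = s ! j"
    proof cases
      case 3
      then show ?thesis using comb_j pair_eq[of i] j by simp
    next
      case 4
      then have "even n" "j = n - 1" using j unfolding i_def by presburger+
      then show ?thesis using 4 comb_j last_zero by simp
    qed (simp_all add: comb_j)
  qed
  moreover have "length a = halfc n" by (simp add: a_def halfc_eq)
  ultimately show ?thesis unfolding VB_def by blast
qed

theorem mainTheorem10:
  fixes n :: nat
  assumes "n \<ge> 3"
  shows "(\<forall>a. length a = halfc n \<longrightarrow>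
            fourier n (indS2 n) (comb n a)
              = (2::real) powr (real (n div 2) - real n) * (-1) ^ (wt a - (if a ! 0 then 1 else 0)))
       \<and> (\<forall>s \<in> cube n. s \<notin> VB n \<longrightarrow> fourier n (indS2 n) s = 0)"
proof (intro conjI allI impI ballI)
  have n: "n \<ge> 1" using assms by simp
  fix a :: "bool list"
  assume "length a = halfc n"
  then have len: "length a = (n + 1) div 2" by (simp add: halfc_eq)
  have "comb n a \<in> cube n" by (simp add: cube_def)
  then have "fourier n (indS2 n) (comb n a) = walk_transform 1 (tl (comb n a)) / 2 ^ n"
    using n by (rule fourier_indS2)
  also have "\<dots> = 2 ^ (n div 2) * (-1) ^ (wt a - (if a ! 0 then 1 else 0)) / 2 ^ n"
    using paired_tl_comb[OF len] pair_sign_tl_comb[OF len n] n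
    by (simp add: walk_transform_from_one)
  finally show "fourier n (indS2 n) (comb n a)
      = (2::real) powr (real (n div 2) - real n) * (-1) ^ (wt a - (if a ! 0 then 1 else 0))"
    by (simp add: powr_diff powr_realpow)
next
  fix s
  assume "s \<in> cube n" "s \<notin> VB n"
  then have "\<not> paired (tl s)" using paired_tl_imp_in_VB assms by fastforce
  then show "fourier n (indS2 n) s = 0"
    using fourier_indS2[OF \<open>s \<in> cube n\<close>] assms by (simp add: walk_transform_from_one)
qed

end
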